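(* For every $t>0$ and all finite sets $X,Y,Z\subset\mathbb{R}$, $d^t_{Mag}(X,Y)+d^t_{Mag}(Y,Z)\ge d^t_{Mag}(X,Z)$.
   Context: For a finite set $A\subset\mathbb{R}$ and $t>0$, the matrix $\zeta_{tA}(x,y)=\exp(-t|x-y|)$ ($x,y\in A$) is invertible and $\mathrm{Mag}(tA)=\mathbb{1}^\top\zeta_{tA}^{-1}\mathbb{1}$, with $\mathrm{Mag}(t\emptyset)=0$. The magnitude distance is $d^t_{Mag}(X,Y)=2\,\mathrm{Mag}(t(X\cup Y))-\mathrm{Mag}(tX)-\mathrm{Mag}(tY)$. *)

theory Defs
  imports "Jordan_Normal_Form.Matrix"
begin

(* The similarity matrix zeta_{tA}(x,y) = exp(-t|x-y|), x,y in A, with the points of A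
   enumerated in increasing order (the value of the magnitude does not depend on the order). *)
definition zeta_mat :: "real \<Rightarrow> real set \<Rightarrow> real mat" where
  "zeta_mat t A = (let xs = sorted_list_of_set A in
     mat (card A) (card A) (\<lambda>(i, j). exp (- t * \<bar>xs ! i - xs ! j\<bar>)))"

definition mat_inv :: "real mat \<Rightarrow> real mat" where
  "mat_inv M = (SOME B. inverts_mat M B \<and> inverts_mat B M)"

definition Mag :: "real \<Rightarrow> real set \<Rightarrow> real" where
  "Mag t A = (let n = card A in
     vec n (\<lambda>_. 1) \<bullet> (mat_inv (zeta_mat t A) *\<^sub>v vec n (\<lambda>_. 1)))"

definition d_Mag :: "real \<Rightarrow> real set \<Rightarrow> real set \<Rightarrow> real" where
  "d_Mag t X Y = 2 * Mag t (X \<union> Y) - Mag t X - Mag t Y"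

end

theory Submission
  imports Defs "Jordan_Normal_Form.Determinant"
begin

(* For A = {a_1 < ... < a_n} the similarity matrix exp (-t \<bar>a_i - a_j\<bar>) has an explicit
   tridiagonal inverse, whose entries sum to the sum over a \<in> A of c (w a), where
   c s = (1 - s) / (1 + s) and w a = exp (-t d) for the distance d from a to the next point
   of A (w a = 0 for the largest point, which thus contributes c 0 = 1).  Inserting a new
   point p whose neighbours in A have weights u and v (0 if missing) replaces the term
   c (u v) of the link it splits by c u + c v, and c u + c v - c (u v) = c u * c v * c (u v).
   Adding points to A can only increase u and v, and c is antitone, so this increment is
   nonnegative and antitone in A: Mag t is monotone and submodular.  Hence
   Mag t (X \<union> Y \<union> Z) - Mag t (X \<union> Y) \<le> Mag t (Y \<union> Z) - Mag t Y and
   Mag t (X \<union> Z) \<le> Mag t (X \<union> Y \<union> Z), and these add up to the claim, since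
   d(X,Y) + d(Y,Z) - d(X,Z) = 2 (Mag t (X \<union> Y) + Mag t (Y \<union> Z) - Mag t Y - Mag t (X \<union> Z)). *)

(* cayley (exp (- t * d)) = tanh (t * d / 2) *)
definition cayley :: "real \<Rightarrow> real" where
  "cayley s = (1 - s) / (1 + s)"

lemma cayley_0 [simp]: "cayley 0 = 1"
  by (simp add: cayley_def)

lemma cayley_add_minus_mult:
  assumes "0 \<le> u" "0 \<le> v"
  shows "cayley u + cayley v - cayley (u * v) = cayley u * cayley v * cayley (u * v)"
proof -
  have "0 < 1 + u" "0 < 1 + v" "0 < 1 + u * v"
    using assms mult_nonneg_nonneg[OF assms] by linarith+
  then have "cayley u + cayley v - cayley (u * v)
      = ((1 - u) * (1 - v) * (1 - u * v)) / ((1 + u) * (1 + v) * (1 + u * v))"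
    unfolding cayley_def by (simp add: add_frac_eq diff_frac_eq) (simp add: algebra_simps)
  then show ?thesis by (simp add: cayley_def)
qed

lemma cayley_antimono:
  assumes "0 \<le> s" "s \<le> s'"
  shows "cayley s' \<le> cayley s"
proof -
  have "cayley x = 2 / (1 + x) - 1" if "0 \<le> x" for x
    using that by (simp add: cayley_def field_simps)
  then show ?thesis
    using assms by (simp add: frac_le)
qed

lemma cayley_nonneg: "0 \<le> s \<Longrightarrow> s \<le> 1 \<Longrightarrow> 0 \<le> cayley s"
  by (simp add: cayley_def)

lemma cayley_gain_antimono:
  assumes "0 \<le> u" "u \<le> u'" "u' \<le> 1" "0 \<le> v" "v \<le> v'" "v' \<le> 1"
  shows "cayley u' * cayley v' * cayley (u' * v') \<le> cayley u * cayley v * cayley (u * v)"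
proof -
  have uv: "0 \<le> u * v" "u * v \<le> u' * v'" "u' * v' \<le> 1"
    using assms by (auto intro: mult_mono mult_le_one)
  show ?thesis
    using assms uv
    by (intro mult_mono cayley_antimono cayley_nonneg mult_nonneg_nonneg) auto
qed

section \<open>The inverse of the similarity matrix of a sorted list\<close>

lemma mat_inv_eqI:
  fixes A B :: "real mat"
  assumes A: "A \<in> carrier_mat n n" and B: "B \<in> carrier_mat n n" and AB: "A * B = 1\<^sub>m n"
  shows "mat_inv A = B"
proof -
  have "inverts_mat A B \<and> inverts_mat B A"
    using A B AB mat_mult_left_right_inverse[OF A B AB] by (auto simp: inverts_mat_def)
  then have "inverts_mat A (mat_inv A) \<and> inverts_mat (mat_inv A) A"
    unfolding mat_inv_def by (rule someI)
  then have AM: "A * mat_inv A = 1\<^sub>m n" and MA: "mat_inv A * A = 1\<^sub>m (dim_row (mat_inv A))"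
    using A by (auto simp: inverts_mat_def)
  have M: "mat_inv A \<in> carrier_mat n n"
    using arg_cong[OF AM, of dim_col] arg_cong[OF MA, of dim_col] A by auto
  have "mat_inv A = (mat_inv A * A) * B"
    using AB A B M by (simp add: assoc_mult_mat[OF M A B])
  also have "\<dots> = B" using MA M B by simp
  finally show ?thesis .
qed

definition zeta_kernel :: "real \<Rightarrow> real \<Rightarrow> real \<Rightarrow> real" where
  "zeta_kernel t x y = exp (- t * \<bar>x - y\<bar>)"

lemma zeta_kernel_commute: "zeta_kernel t x y = zeta_kernel t y x"
  by (simp add: zeta_kernel_def abs_minus_commute)

lemma zeta_kernel_between:
  assumes "x \<le> y" "y \<le> z"
  shows "zeta_kernel t x z = zeta_kernel t x y * zeta_kernel t y z"
proof -
  have "\<bar>x - z\<bar> = \<bar>x - y\<bar> + \<bar>y - z\<bar>" using assms by simp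
  then show ?thesis by (simp add: zeta_kernel_def distrib_left flip: exp_add)
qed

definition zeta_mat_of_list :: "real \<Rightarrow> real list \<Rightarrow> real mat" where
  "zeta_mat_of_list t xs = mat (length xs) (length xs) (\<lambda>(i, j). zeta_kernel t (xs ! i) (xs ! j))"

(* The weight of the link between xs ! (j - 1) and xs ! j.  It is 0 for j = 0 and for
   j >= length xs, which spares the formula for the inverse any boundary cases. *)
definition link_weight :: "real \<Rightarrow> real list \<Rightarrow> nat \<Rightarrow> real" where
  "link_weight t xs j =
     (if 0 < j \<and> j < length xs then zeta_kernel t (xs ! (j - 1)) (xs ! j) else 0)"

definition zeta_inv_of_list :: "real \<Rightarrow> real list \<Rightarrow> real mat" where
  "zeta_inv_of_list t xs = mat (length xs) (length xs) (\<lambda>(i, j).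
     let r = link_weight t xs in
     if i = j then 1 / (1 - (r j)\<^sup>2) + (r (Suc j))\<^sup>2 / (1 - (r (Suc j))\<^sup>2)
     else if i = Suc j \<or> j = Suc i then - r (max i j) / (1 - (r (max i j))\<^sup>2)
     else 0)"

lemma sum_tridiagonal:
  fixes f :: "nat \<Rightarrow> 'a :: comm_semiring_1"
  assumes "j < n"
  shows "(\<Sum>k<n. f k * (if k = j then a else if k = Suc j then b else if j = Suc k then c else 0))
    = f j * a + (if Suc j < n then f (Suc j) * b else 0) + (if 0 < j then f (j - 1) * c else 0)"
proof -
  have "f k * (if k = j then a else if k = Suc j then b else if j = Suc k then c else 0)
      = (if k = j then f j * a else 0) + (if k = Suc j then f (Suc j) * b else 0)
        + (if k = j - 1 \<and> 0 < j then f (j - 1) * c else 0)" for k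
    by auto
  then show ?thesis
    using assms by (simp add: sum.distrib sum.If_cases lessThan_def)
qed

lemma sum_mult_zeta_inv_of_list_col:
  fixes t :: real and xs :: "real list" and f :: "nat \<Rightarrow> real"
  assumes j: "j < length xs"
  defines "r \<equiv> link_weight t xs"
  shows "(\<Sum>k<length xs. f k * zeta_inv_of_list t xs $$ (k, j))
    = f j * (1 / (1 - (r j)\<^sup>2) + (r (Suc j))\<^sup>2 / (1 - (r (Suc j))\<^sup>2))
      - f (Suc j) * r (Suc j) / (1 - (r (Suc j))\<^sup>2) - f (j - 1) * r j / (1 - (r j)\<^sup>2)"
proof -
  have r_0: "r 0 = 0" and r_n: "\<not> Suc j < length xs \<Longrightarrow> r (Suc j) = 0"
    by (simp_all add: r_def link_weight_def)
  have "(\<Sum>k<length xs. f k * zeta_inv_of_list t xs $$ (k, j))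
      = (\<Sum>k<length xs. f k * (if k = j then 1 / (1 - (r j)\<^sup>2) + (r (Suc j))\<^sup>2 / (1 - (r (Suc j))\<^sup>2)
          else if k = Suc j then - r (Suc j) / (1 - (r (Suc j))\<^sup>2)
          else if j = Suc k then - r j / (1 - (r j)\<^sup>2) else 0))"
    using j by (auto simp: zeta_inv_of_list_def r_def Let_def intro!: sum.cong)
  then show ?thesis
    unfolding sum_tridiagonal[OF j] using r_0 r_n by auto
qed

context
  fixes t :: real and xs :: "real list"
  assumes t: "t > 0" and xs: "sorted_wrt (<) xs"
begin

lemma link_weight_bounds: "0 \<le> link_weight t xs j" "link_weight t xs j < 1"
proof -
  show "0 \<le> link_weight t xs j" by (simp add: link_weight_def zeta_kernel_def)
  have "xs ! (j - 1) < xs ! j" if "0 < j" "j < length xs"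
    using xs that by (simp add: sorted_wrt_nth_less)
  then show "link_weight t xs j < 1"
    using t by (auto simp: link_weight_def zeta_kernel_def)
qed

lemma zeta_kernel_nth_between:
  assumes "i \<le> j" "j \<le> k" "k < length xs"
  shows "zeta_kernel t (xs ! i) (xs ! k) = zeta_kernel t (xs ! i) (xs ! j) * zeta_kernel t (xs ! j) (xs ! k)"
proof -
  have "sorted xs" using xs by (simp add: strict_sorted_iff)
  then show ?thesis
    using assms by (intro zeta_kernel_between) (simp_all add: sorted_nth_mono)
qed

lemma zeta_kernel_link_left:
  assumes "i < length xs" "j < length xs"
  shows "zeta_kernel t (xs ! i) (xs ! (j - 1)) * link_weight t xs j
    = (if i < j then 1 else (link_weight t xs j)\<^sup>2) * zeta_kernel t (xs ! i) (xs ! j)"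
proof (cases "j = 0")
  case False
  then have r: "link_weight t xs j = zeta_kernel t (xs ! (j - 1)) (xs ! j)"
    using assms by (simp add: link_weight_def)
  show ?thesis
  proof (cases "i < j")
    case True
    then show ?thesis
      using r assms zeta_kernel_nth_between[of i "j - 1" j] by simp
  next
    case False
    then show ?thesis
      using r assms zeta_kernel_nth_between[of "j - 1" j i]
      by (simp add: zeta_kernel_commute[of t "xs ! i"] power2_eq_square)
  qed
qed (simp add: link_weight_def)

lemma zeta_kernel_link_right:
  assumes "i < length xs" "j < length xs"
  shows "zeta_kernel t (xs ! i) (xs ! Suc j) * link_weight t xs (Suc j)
    = (if j < i then 1 else (link_weight t xs (Suc j))\<^sup>2) * zeta_kernel t (xs ! i) (xs ! j)"
proof (cases "Suc j < length xs")
  case True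
  then have r: "link_weight t xs (Suc j) = zeta_kernel t (xs ! j) (xs ! Suc j)"
    by (simp add: link_weight_def)
  show ?thesis
  proof (cases "j < i")
    case True
    then show ?thesis
      using r assms zeta_kernel_nth_between[of j "Suc j" i]
      by (simp add: zeta_kernel_commute[of t "xs ! i"])
  next
    case False
    then show ?thesis
      using r True zeta_kernel_nth_between[of i j "Suc j"] by (simp add: power2_eq_square)
  qed
qed (use assms in \<open>simp add: link_weight_def\<close>)

lemma zeta_mat_of_list_mult_inv: "zeta_mat_of_list t xs * zeta_inv_of_list t xs = 1\<^sub>m (length xs)"
proof (rule eq_matI)
  fix i j assume "i < dim_row (1\<^sub>m (length xs))" "j < dim_col (1\<^sub>m (length xs))"
  then have i: "i < length xs" and j: "j < length xs" by auto
  define z where "z k = zeta_kernel t (xs ! i) (xs ! k)" for k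
  define r where "r = link_weight t xs"
  define c where "c k = 1 / (1 - (r k)\<^sup>2)" for k
  have c_r: "c k - (r k)\<^sup>2 * c k = 1" for k
  proof -
    have "(r k)\<^sup>2 < 1"
      using link_weight_bounds[of k] unfolding r_def by (simp add: power2_less_1_iff abs_if)
    then show ?thesis by (simp add: c_def field_simps)
  qed
  have "(zeta_mat_of_list t xs * zeta_inv_of_list t xs) $$ (i, j)
      = (\<Sum>k<length xs. z k * zeta_inv_of_list t xs $$ (k, j))"
    using i j by (simp add: zeta_mat_of_list_def zeta_inv_of_list_def scalar_prod_def atLeast0LessThan z_def)
  also have "\<dots> = z j * (c j + (r (Suc j))\<^sup>2 * c (Suc j))
      - z (Suc j) * r (Suc j) * c (Suc j) - z (j - 1) * r j * c j"
    unfolding sum_mult_zeta_inv_of_list_col[OF j] by (simp add: r_def c_def)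
  also have "\<dots> = z j * (c j + (r (Suc j))\<^sup>2 * c (Suc j)
      - (if j < i then 1 else (r (Suc j))\<^sup>2) * c (Suc j) - (if i < j then 1 else (r j)\<^sup>2) * c j)"
    using zeta_kernel_link_left[OF i j] zeta_kernel_link_right[OF i j]
    unfolding z_def r_def by (simp add: algebra_simps)
  also have "\<dots> = z j * (if i = j then 1 else 0)"
  proof -
    have "c j + (r (Suc j))\<^sup>2 * c (Suc j) - (if j < i then 1 else (r (Suc j))\<^sup>2) * c (Suc j)
        - (if i < j then 1 else (r j)\<^sup>2) * c j = (if i = j then 1 else 0)"
      using c_r[of j] c_r[of "Suc j"]
      by (cases i j rule: linorder_cases) (simp_all add: algebra_simps)
    then show ?thesis by simp
  qed
  also have "\<dots> = 1\<^sub>m (length xs) $$ (i, j)"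
    using i j by (simp add: z_def zeta_kernel_def)
  finally show "(zeta_mat_of_list t xs * zeta_inv_of_list t xs) $$ (i, j) = 1\<^sub>m (length xs) $$ (i, j)" .
qed (simp_all add: zeta_mat_of_list_def zeta_inv_of_list_def)

lemma sum_zeta_inv_of_list:
  "vec (length xs) (\<lambda>_. 1) \<bullet> (zeta_inv_of_list t xs *\<^sub>v vec (length xs) (\<lambda>_. 1))
    = (\<Sum>j<length xs. cayley (link_weight t xs (Suc j)))"
proof -
  define n where "n = length xs"
  define r where "r = link_weight t xs"
  have r_bounds: "0 \<le> r k" "r k < 1" for k
    using link_weight_bounds unfolding r_def by auto
  have "vec n (\<lambda>_. 1) \<bullet> (zeta_inv_of_list t xs *\<^sub>v vec n (\<lambda>_. 1))
      = (\<Sum>i<n. \<Sum>j<n. zeta_inv_of_list t xs $$ (i, j))"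
  proof -
    have "zeta_inv_of_list t xs \<in> carrier_mat n n" by (simp add: n_def zeta_inv_of_list_def)
    then show ?thesis by (simp add: scalar_prod_def atLeast0LessThan)
  qed
  also have "\<dots> = (\<Sum>j<n. \<Sum>k<n. 1 * zeta_inv_of_list t xs $$ (k, j))"
    by (subst sum.swap) simp
  also have "\<dots> = (\<Sum>j<n. 1 / (1 + r j) - r (Suc j) / (1 + r (Suc j)))"
  proof (rule sum.cong)
    fix j assume "j \<in> {..<n}"
    then have j: "j < length xs" by (simp add: n_def)
    have q: "(1 - a) / (1 - a\<^sup>2) = 1 / (1 + a)" if "0 \<le> a" "a < 1" for a :: real
    proof -
      have "1 - a\<^sup>2 = (1 - a) * (1 + a)" by (simp add: power2_eq_square algebra_simps)
      then show ?thesis using that by simp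
    qed
    have "(\<Sum>k<n. 1 * zeta_inv_of_list t xs $$ (k, j))
        = (1 - r j) / (1 - (r j)\<^sup>2) - r (Suc j) * ((1 - r (Suc j)) / (1 - (r (Suc j))\<^sup>2))"
      unfolding n_def r_def sum_mult_zeta_inv_of_list_col[OF j]
      by (simp add: diff_divide_distrib right_diff_distrib power2_eq_square)
    then show "(\<Sum>k<n. 1 * zeta_inv_of_list t xs $$ (k, j)) = 1 / (1 + r j) - r (Suc j) / (1 + r (Suc j))"
      using r_bounds[of j] r_bounds[of "Suc j"] by (simp add: q)
  qed simp
  also have "\<dots> = (\<Sum>j<n. cayley (r (Suc j))) + (\<Sum>j<n. 1 / (1 + r j) - 1 / (1 + r (Suc j)))"
  proof -
    have "1 / (1 + r j) - r (Suc j) / (1 + r (Suc j))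
        = cayley (r (Suc j)) + (1 / (1 + r j) - 1 / (1 + r (Suc j)))" for j
      using r_bounds[of "Suc j"] by (simp add: cayley_def diff_divide_distrib)
    then show ?thesis by (simp only: sum.distrib)
  qed
  also have "\<dots> = (\<Sum>j<n. cayley (r (Suc j)))"
    using sum_lessThan_telescope'[of "\<lambda>j. 1 / (1 + r j)" n]
    by (simp add: r_def n_def link_weight_def)
  finally show ?thesis unfolding n_def r_def .
qed

end

section \<open>Magnitude as a sum over nearest-neighbour links\<close>

(* For t \<ge> 0: exp (- t * d) for the distance d from a to the nearest point of A on its right
   (on its left, for pred_weight), and 0 if there is no such point. *)
definition succ_weight :: "real \<Rightarrow> real set \<Rightarrow> real \<Rightarrow> real" where
  "succ_weight t A a = Max (insert 0 ((\<lambda>b. exp (- t * (b - a))) ` {b \<in> A. a < b}))"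

definition pred_weight :: "real \<Rightarrow> real set \<Rightarrow> real \<Rightarrow> real" where
  "pred_weight t A a = Max (insert 0 ((\<lambda>b. exp (- t * (a - b))) ` {b \<in> A. b < a}))"

lemma succ_weight_nth:
  assumes t: "0 \<le> t" and xs: "sorted_wrt (<) xs" and j: "j < length xs"
  shows "succ_weight t (set xs) (xs ! j) = link_weight t xs (Suc j)"
proof (cases "Suc j < length xs")
  case True
  have "exp (- t * (b - xs ! j)) \<le> exp (- t * (xs ! Suc j - xs ! j))"
    if "b \<in> set xs" "xs ! j < b" for b
  proof -
    obtain k where k: "k < length xs" "b = xs ! k" using \<open>b \<in> set xs\<close> by (auto simp: in_set_conv_nth)
    have "j < k"
      using k j \<open>xs ! j < b\<close> xs by (metis linorder_neqE_nat not_less_iff_gr_or_eq sorted_wrt_nth_less)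
    then have "xs ! Suc j \<le> b"
      using k xs by (metis Suc_lessI order.order_iff_strict sorted_wrt_nth_less)
    then have "t * (xs ! Suc j - xs ! j) \<le> t * (b - xs ! j)"
      using t by (intro mult_left_mono) auto
    then show ?thesis by simp
  qed
  moreover have "xs ! j < xs ! Suc j" using True xs by (simp add: sorted_wrt_nth_less)
  ultimately have "succ_weight t (set xs) (xs ! j) = exp (- t * (xs ! Suc j - xs ! j))"
    unfolding succ_weight_def using True by (intro Max_eqI) auto
  then show ?thesis
    using True \<open>xs ! j < xs ! Suc j\<close> by (simp add: link_weight_def zeta_kernel_def)
next
  case False
  have no_succ: "{b \<in> set xs. xs ! j < b} = {}"
    using j False xs
    by (auto simp: in_set_conv_nth) (metis less_asym linorder_neqE_nat not_less_eq sorted_wrt_nth_less)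
  show ?thesis
    using False unfolding succ_weight_def no_succ by (simp add: link_weight_def)
qed

lemma Mag_eq_sum_cayley:
  assumes t: "t > 0" and A: "finite A"
  shows "Mag t A = (\<Sum>a\<in>A. cayley (succ_weight t A a))"
proof -
  define xs where "xs = sorted_list_of_set A"
  have xs: "sorted_wrt (<) xs" "distinct xs" "set xs = A" "length xs = card A"
    using A by (simp_all add: xs_def strict_sorted_list_of_set)
  have "zeta_mat t A = zeta_mat_of_list t xs"
    by (simp add: zeta_mat_def zeta_mat_of_list_def zeta_kernel_def xs_def Let_def)
  moreover have "mat_inv (zeta_mat_of_list t xs) = zeta_inv_of_list t xs"
    using zeta_mat_of_list_mult_inv[OF t xs(1)]
    by (intro mat_inv_eqI) (simp_all add: zeta_mat_of_list_def zeta_inv_of_list_def)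
  ultimately have "Mag t A = (\<Sum>j<length xs. cayley (link_weight t xs (Suc j)))"
    using sum_zeta_inv_of_list[OF t xs(1)] by (simp add: Mag_def xs(4))
  also have "\<dots> = (\<Sum>j<length xs. cayley (succ_weight t A (xs ! j)))"
    using succ_weight_nth[OF less_imp_le[OF t] xs(1)] xs(3) by simp
  also have "\<dots> = (\<Sum>a\<in>A. cayley (succ_weight t A a))"
    using sum.reindex_bij_betw[OF bij_betw_nth[OF xs(2) refl xs(3)[symmetric]]] by simp
  finally show ?thesis .
qed

section \<open>Inserting a point\<close>

lemma succ_weight_bounds:
  assumes "0 \<le> t" "finite A"
  shows "0 \<le> succ_weight t A a" "succ_weight t A a \<le> 1"
  using assms by (auto simp: succ_weight_def)

lemma pred_weight_bounds:
  assumes "0 \<le> t" "finite A"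
  shows "0 \<le> pred_weight t A a" "pred_weight t A a \<le> 1"
  using assms by (auto simp: pred_weight_def)

lemma succ_weight_mono:
  assumes "finite B" "A \<subseteq> B"
  shows "succ_weight t A a \<le> succ_weight t B a"
  unfolding succ_weight_def using assms by (intro Max_mono) auto

lemma pred_weight_mono:
  assumes "finite B" "A \<subseteq> B"
  shows "pred_weight t A a \<le> pred_weight t B a"
  unfolding pred_weight_def using assms by (intro Max_mono) auto

lemma succ_weight_ge:
  assumes "finite A" "b \<in> A" "a < b"
  shows "exp (- t * (b - a)) \<le> succ_weight t A a"
  unfolding succ_weight_def using assms by (intro Max_ge) auto

lemma succ_weight_insert:
  assumes "finite A"
  shows "succ_weight t (insert p A) a
    = (if a < p then max (exp (- t * (p - a))) (succ_weight t A a) else succ_weight t A a)"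
proof -
  have "{b \<in> insert p A. a < b} = (if a < p then insert p {b \<in> A. a < b} else {b \<in> A. a < b})"
    by auto
  moreover have "Max (insert 0 (insert x B)) = max x (Max (insert 0 B))" if "finite B" for x :: real and B
    using that by (metis Max.insert finite.insertI insert_commute insert_not_empty)
  ultimately show ?thesis
    using assms unfolding succ_weight_def by simp
qed

lemma succ_weight_insert_unchanged:
  assumes "0 \<le> t" "finite A" "a < p \<Longrightarrow> \<exists>b\<in>A. a < b \<and> b < p"
  shows "succ_weight t (insert p A) a = succ_weight t A a"
proof (cases "a < p")
  case True
  with assms obtain b where b: "b \<in> A" "a < b" "b < p" by blast
  have "exp (- t * (p - a)) \<le> exp (- t * (b - a))"
    using assms(1) b(3) by (simp add: mult_left_mono)
  also have "\<dots> \<le> succ_weight t A a"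
    using assms(2) b(1,2) by (rule succ_weight_ge)
  finally show ?thesis
    using True assms(2) by (simp add: succ_weight_insert)
qed (use assms in \<open>simp add: succ_weight_insert\<close>)

lemma succ_weight_factor:
  assumes "0 \<le> t" "finite A" "a < p" "\<And>b. b \<in> A \<Longrightarrow> a < b \<Longrightarrow> p < b"
  shows "succ_weight t A a = exp (- t * (p - a)) * succ_weight t A p"
proof -
  define c where "c = exp (- t * (p - a))"
  have "{b \<in> A. a < b} = {b \<in> A. p < b}"
    using assms(3,4) by auto
  moreover have "exp (- t * (b - a)) = c * exp (- t * (b - p))" for b
    by (simp add: c_def algebra_simps flip: exp_add)
  ultimately have "succ_weight t A a = Max ((*) c ` insert 0 ((\<lambda>b. exp (- t * (b - p))) ` {b \<in> A. p < b}))"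
    by (simp add: succ_weight_def image_image)
  also have "\<dots> = c * succ_weight t A p"
    unfolding succ_weight_def using assms(2)
    by (intro mono_Max_commute[symmetric] monoI) (simp_all add: c_def mult_left_mono)
  finally show ?thesis by (simp add: c_def)
qed

lemma pred_weight_eq:
  assumes "0 \<le> t" "finite A" "q \<in> A" "q < p" "\<And>b. b \<in> A \<Longrightarrow> b < p \<Longrightarrow> b \<le> q"
  shows "pred_weight t A p = exp (- t * (p - q))"
  unfolding pred_weight_def using assms by (intro Max_eqI) (auto simp: mult_left_mono)

lemma Mag_insert_cayley:
  assumes t: "t > 0" and A: "finite A" and p: "p \<notin> A"
  defines "u \<equiv> pred_weight t A p" and "v \<equiv> succ_weight t A p"
  shows "Mag t (insert p A) = Mag t A + cayley u + cayley v - cayley (u * v)"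
proof -
  define w where "w = succ_weight t (insert p A)"
  have Mag_ins: "Mag t (insert p A) = cayley v + (\<Sum>a\<in>A. cayley (w a))"
    using t A p by (simp add: Mag_eq_sum_cayley w_def v_def succ_weight_insert)
  have unchanged: "w a = succ_weight t A a" if "a < p \<Longrightarrow> \<exists>b\<in>A. a < b \<and> b < p" for a
    using t A that unfolding w_def by (intro succ_weight_insert_unchanged) auto
  show ?thesis
  proof (cases "\<exists>b\<in>A. b < p")
    case False
    then have no_pred: "{b \<in> A. b < p} = {}" by auto
    have "u = 0" unfolding u_def pred_weight_def no_pred by simp
    moreover have "(\<Sum>a\<in>A. cayley (w a)) = Mag t A"
      using False unchanged t A by (auto simp: Mag_eq_sum_cayley intro!: sum.cong)
    ultimately show ?thesis using Mag_ins by simp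
  next
    case True
    define q where "q = Max {b \<in> A. b < p}"
    have "q \<in> {b \<in> A. b < p}"
      unfolding q_def using A True by (intro Max_in) auto
    then have q: "q \<in> A" "q < p" "\<And>b. b \<in> A \<Longrightarrow> b < p \<Longrightarrow> b \<le> q"
      using A by (auto simp: q_def)
    have u: "u = exp (- t * (p - q))"
      unfolding u_def using t A q by (intro pred_weight_eq) auto
    have "p < b" if "b \<in> A" "q < b" for b
      using q(3)[OF that(1)] that p by (metis linorder_neqE_linordered_idom not_le)
    then have q_succ: "succ_weight t A q = u * v"
      unfolding u v_def using t A q by (intro succ_weight_factor) auto
    have "u * v \<le> u"
      using succ_weight_bounds[of t A p] t A by (simp add: u v_def mult_left_le)
    then have "w q = u"
      using q A u q_succ by (simp add: w_def succ_weight_insert)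
    moreover have "w a = succ_weight t A a" if "a \<in> A - {q}" for a
      using that q by (intro unchanged) force
    ultimately have "(\<Sum>a\<in>A. cayley (w a)) = cayley u + (\<Sum>a\<in>A - {q}. cayley (succ_weight t A a))"
      using A q by (simp add: sum.remove)
    moreover have "Mag t A = cayley (u * v) + (\<Sum>a\<in>A - {q}. cayley (succ_weight t A a))"
      using t A q q_succ by (simp add: Mag_eq_sum_cayley sum.remove)
    ultimately show ?thesis using Mag_ins by simp
  qed
qed

lemma Mag_insert:
  assumes "t > 0" "finite A" "p \<notin> A"
  defines "u \<equiv> pred_weight t A p" and "v \<equiv> succ_weight t A p"
  shows "Mag t (insert p A) = Mag t A + cayley u * cayley v * cayley (u * v)"
  using Mag_insert_cayley[OF assms(1-3)] cayley_add_minus_mult[of u v]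
    pred_weight_bounds[of t A p] succ_weight_bounds[of t A p] assms
  by simp

section \<open>Monotonicity and submodularity of magnitude\<close>

lemma Mag_le_Mag_insert:
  assumes "t > 0" "finite A"
  shows "Mag t A \<le> Mag t (insert p A)"
proof (cases "p \<in> A")
  case False
  then show ?thesis
    using Mag_insert[OF assms False] pred_weight_bounds[of t A p] succ_weight_bounds[of t A p] assms
    by (simp add: cayley_nonneg mult_le_one)
qed (simp add: insert_absorb)

lemma Mag_insert_increment_antimono:
  assumes t: "t > 0" and B: "finite B" and AB: "A \<subseteq> B"
  shows "Mag t (insert p B) - Mag t B \<le> Mag t (insert p A) - Mag t A"
proof (cases "p \<in> B")
  case True
  then show ?thesis
    using Mag_le_Mag_insert[OF t finite_subset[OF AB B]] by (simp add: insert_absorb)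
next
  case False
  have A: "finite A" and pA: "p \<notin> A"
    using finite_subset[OF AB B] False AB by auto
  have "cayley (pred_weight t B p) * cayley (succ_weight t B p)
        * cayley (pred_weight t B p * succ_weight t B p)
      \<le> cayley (pred_weight t A p) * cayley (succ_weight t A p)
        * cayley (pred_weight t A p * succ_weight t A p)"
    using t pred_weight_bounds[OF _ A] succ_weight_bounds[OF _ B] pred_weight_bounds[OF _ B]
      pred_weight_mono[OF B AB] succ_weight_mono[OF B AB] succ_weight_bounds[OF _ A]
    by (intro cayley_gain_antimono) auto
  then show ?thesis
    using Mag_insert[OF t B False] Mag_insert[OF t A pA] by simp
qed

lemma Mag_le_Mag_union:
  assumes "t > 0" "finite A" "finite C"
  shows "Mag t A \<le> Mag t (A \<union> C)"
  using assms(3)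
proof (induction C rule: finite_induct)
  case (insert p C)
  then show ?case
    using Mag_le_Mag_insert[of t "A \<union> C" p] assms by simp
qed simp

lemma Mag_union_increment_antimono:
  assumes "t > 0" "finite B" "finite C" "A \<subseteq> B"
  shows "Mag t (B \<union> C) - Mag t B \<le> Mag t (A \<union> C) - Mag t A"
  using assms(3)
proof (induction C rule: finite_induct)
  case (insert p C)
  have "Mag t (insert p (B \<union> C)) - Mag t (B \<union> C) \<le> Mag t (insert p (A \<union> C)) - Mag t (A \<union> C)"
    using assms insert.hyps by (intro Mag_insert_increment_antimono) auto
  then show ?case
    using insert.IH by simp
qed simp

theorem propositionB7:
  fixes t :: real and X Y Z :: "real set"
  assumes "t > 0" and "finite X" and "finite Y" and "finite Z"
  shows "d_Mag t X Y + d_Mag t Y Z \<ge> d_Mag t X Z"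
proof -
  have "Mag t (X \<union> Y \<union> Z) - Mag t (X \<union> Y) \<le> Mag t (Y \<union> Z) - Mag t Y"
    using assms by (intro Mag_union_increment_antimono) auto
  moreover have "Mag t (X \<union> Z) \<le> Mag t (X \<union> Z \<union> Y)"
    using assms by (intro Mag_le_Mag_union) auto
  moreover have "X \<union> Z \<union> Y = X \<union> Y \<union> Z" by auto
  ultimately show ?thesis
    unfolding d_Mag_def by (simp add: Un_commute)
qed

end
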